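(* Let $\{\varphi_n\}_{n\ge1}$ be an orthonormal system on $[0,1]$ and let $\{d_n\}$ be a sequence of real numbers with $d_n=O\!\left(\frac{\sqrt{n}}{\log^2(n+1)}\right)$. For a real sequence $b=\{b_n\}\in \ell_2$ put $$Q_n(d,b,x)=\sum_{k=1}^{n} d_k b_k \log k\,\varphi_k(x),\qquad B_n(d,b)=\max_{1\le i<n}\left|\int_0^{i/n}Q_n(d,b,x)\,dx\right|,\qquad U_n(f)=\int_0^1 f(x)Q_n(d,b,x)\,dx.$$ If for some $b\in\ell_2$ one has $\limsup_{n\to\infty}B_n(d,b)=+\infty$, then there exists a function $g\in A$ such that $\limsup_{n\to\infty}|U_n(g)|=+\infty$.
   Context: $A$ denotes the Banach space of absolutely continuous functions on $[0,1]$ with norm $\|f\|_A=\|f\|_C+\int_0^1|f'(x)|\,dx$, where $\|f\|_C=\max_{x\in[0,1]}|f(x)|$. An orthonormal system on $[0,1]$ is a sequence of functions orthonormal in $L_2(0,1)$. $\log$ denotes the logarithm (so $\log 1=0$). *)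

theory Defs
  imports "HOL-Analysis.Analysis"
begin

definition abs_cont_on :: "real \<Rightarrow> real \<Rightarrow> (real \<Rightarrow> real) \<Rightarrow> bool" where
  "abs_cont_on c d f \<longleftrightarrow>
     (\<forall>\<epsilon>>0. \<exists>\<delta>>0. \<forall>(n::nat) (a::nat \<Rightarrow> real) (b::nat \<Rightarrow> real).
        (\<forall>k<n. c \<le> a k \<and> a k \<le> b k \<and> b k \<le> d) \<and>
        (\<forall>k<n. \<forall>j<n. k \<noteq> j \<longrightarrow> b k \<le> a j \<or> b j \<le> a k) \<and>
        (\<Sum>k<n. b k - a k) < \<delta>
        \<longrightarrow> (\<Sum>k<n. \<bar>f (b k) - f (a k)\<bar>) < \<epsilon>)"

definition orthonormal_system :: "(nat \<Rightarrow> real \<Rightarrow> real) \<Rightarrow> bool" where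
  "orthonormal_system \<phi> \<longleftrightarrow>
     (\<forall>n\<ge>1. \<phi> n \<in> borel_measurable (lebesgue_on {0..1})) \<and>
     (\<forall>i\<ge>1. \<forall>j\<ge>1. integrable (lebesgue_on {0..1}) (\<lambda>x. \<phi> i x * \<phi> j x) \<and>
        integral\<^sup>L (lebesgue_on {0..1}) (\<lambda>x. \<phi> i x * \<phi> j x) = (if i = j then 1 else 0))"

definition Qn :: "(nat \<Rightarrow> real) \<Rightarrow> (nat \<Rightarrow> real) \<Rightarrow> (nat \<Rightarrow> real \<Rightarrow> real) \<Rightarrow> nat \<Rightarrow> real \<Rightarrow> real" where
  "Qn d b \<phi> n x = (\<Sum>k=1..n. d k * b k * ln (real k) * \<phi> k x)"

text \<open>B_n = max over 1 <= i < n; for n < 2 the index set is empty and we put 0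
  (irrelevant for the limsup).\<close>
definition Bn :: "(nat \<Rightarrow> real) \<Rightarrow> (nat \<Rightarrow> real) \<Rightarrow> (nat \<Rightarrow> real \<Rightarrow> real) \<Rightarrow> nat \<Rightarrow> real" where
  "Bn d b \<phi> n = (if n < 2 then 0 else
     Max ((\<lambda>i. \<bar>integral\<^sup>L (lebesgue_on {0..real i / real n}) (Qn d b \<phi> n)\<bar>) ` {1..<n}))"

definition Un_op :: "(nat \<Rightarrow> real) \<Rightarrow> (nat \<Rightarrow> real) \<Rightarrow> (nat \<Rightarrow> real \<Rightarrow> real) \<Rightarrow> nat \<Rightarrow> (real \<Rightarrow> real) \<Rightarrow> real" where
  "Un_op d b \<phi> n f = integral\<^sup>L (lebesgue_on {0..1}) (\<lambda>x. f x * Qn d b \<phi> n x)"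

end

(*
  U_n(f) is integration against the integrable kernel Q_n, hence a functional of norm
  at most L_n = ||Q_n||_1 on bounded measurable functions. B_n is |U_n| at the indicator
  of some [0, t], and continuous piecewise linear ramps approximate these indicators in
  L_1(|Q_n|), so the values of |U_n| on ramps are unbounded. If U_n(g) were bounded for
  every absolutely continuous g, in particular for every finite combination of ramps,
  a gliding hump construction yields indices n_j, ramps w_j and weights
  0 < c_j <= 2^-(j+1) such that c_j |U_(n_j)(w_j)| exceeds
  j + 1 + |U_(n_j)(c_0 w_0 + ... + c_(j-1) w_(j-1))|, while the later weights are so
  small compared with L_(n_j) that the tail changes U_(n_j) by at most 1. The sum
  g = sum c_j w_j is absolutely continuous, since a ramp has variation at most 1 on every
  family of non-overlapping intervals, yet |U_(n_j)(g)| > j.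
*)
theory Submission
  imports Defs
begin

section \<open>Absolute continuity\<close>

definition nonoverlapping_on ::
    "real \<Rightarrow> real \<Rightarrow> nat \<Rightarrow> (nat \<Rightarrow> real) \<Rightarrow> (nat \<Rightarrow> real) \<Rightarrow> bool" where
  "nonoverlapping_on c d n a b \<longleftrightarrow>
     (\<forall>k<n. c \<le> a k \<and> a k \<le> b k \<and> b k \<le> d) \<and>
     (\<forall>k<n. \<forall>j<n. k \<noteq> j \<longrightarrow> b k \<le> a j \<or> b j \<le> a k)"

lemma abs_cont_on_iff:
  "abs_cont_on c d f \<longleftrightarrow>
     (\<forall>\<epsilon>>0. \<exists>\<delta>>0. \<forall>n a b. nonoverlapping_on c d n a b \<and> (\<Sum>k<n. b k - a k) < \<delta>
        \<longrightarrow> (\<Sum>k<n. \<bar>f (b k) - f (a k)\<bar>) < \<epsilon>)"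
  unfolding abs_cont_on_def nonoverlapping_on_def by (simp only: conj_assoc)

lemma abs_cont_onI:
  assumes "\<And>\<epsilon>. \<epsilon> > 0 \<Longrightarrow> \<exists>\<delta>>0. \<forall>n a b. nonoverlapping_on c d n a b \<and> (\<Sum>k<n. b k - a k) < \<delta>
             \<longrightarrow> (\<Sum>k<n. \<bar>f (b k) - f (a k)\<bar>) < \<epsilon>"
  shows "abs_cont_on c d f"
  unfolding abs_cont_on_iff by (intro allI impI assms)

lemma abs_cont_onE:
  assumes "abs_cont_on c d f" "\<epsilon> > 0"
  obtains \<delta> where "\<delta> > 0"
    "\<And>n a b. nonoverlapping_on c d n a b \<Longrightarrow> (\<Sum>k<n. b k - a k) < \<delta> \<Longrightarrow>
      (\<Sum>k<n. \<bar>f (b k) - f (a k)\<bar>) < \<epsilon>"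
proof -
  from assms obtain \<delta> where "\<delta> > 0" and "\<forall>n a b. nonoverlapping_on c d n a b \<and> (\<Sum>k<n. b k - a k) < \<delta>
        \<longrightarrow> (\<Sum>k<n. \<bar>f (b k) - f (a k)\<bar>) < \<epsilon>"
    unfolding abs_cont_on_iff by auto
  then show thesis using that by auto
qed

lemma lipschitz_on_imp_abs_cont_on:
  assumes "L-lipschitz_on {c..d} f"
  shows "abs_cont_on c d f"
proof (rule abs_cont_onI)
  fix \<epsilon> :: real assume "\<epsilon> > 0"
  have L: "0 \<le> L" using assms by (rule lipschitz_on_nonneg)
  show "\<exists>\<delta>>0. \<forall>n a b. nonoverlapping_on c d n a b \<and> (\<Sum>k<n. b k - a k) < \<delta>
          \<longrightarrow> (\<Sum>k<n. \<bar>f (b k) - f (a k)\<bar>) < \<epsilon>"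
  proof (intro exI[of _ "\<epsilon> / (L + 1)"] conjI allI impI)
    show "\<epsilon> / (L + 1) > 0" using \<open>\<epsilon> > 0\<close> L by simp
    fix n a b assume H: "nonoverlapping_on c d n a b \<and> (\<Sum>k<n. b k - a k) < \<epsilon> / (L + 1)"
    have "\<bar>f (b k) - f (a k)\<bar> \<le> L * (b k - a k)" if "k < n" for k
      using lipschitz_onD[OF assms, of "b k" "a k"] H that by (auto simp: nonoverlapping_on_def dist_real_def)
    then have "(\<Sum>k<n. \<bar>f (b k) - f (a k)\<bar>) \<le> (\<Sum>k<n. L * (b k - a k))"
      by (intro sum_mono) auto
    also have "\<dots> = L * (\<Sum>k<n. b k - a k)" by (simp add: sum_distrib_left)
    also have "\<dots> \<le> L * (\<epsilon> / (L + 1))" using H L by (intro mult_left_mono) auto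
    also have "\<dots> < \<epsilon>" using L \<open>\<epsilon> > 0\<close> by (simp add: field_simps)
    finally show "(\<Sum>k<n. \<bar>f (b k) - f (a k)\<bar>) < \<epsilon>" .
  qed
qed

lemma abs_cont_on_add:
  assumes f: "abs_cont_on c d f" and g: "abs_cont_on c d g"
  shows "abs_cont_on c d (\<lambda>x. f x + g x)"
proof (rule abs_cont_onI)
  fix \<epsilon> :: real assume "\<epsilon> > 0"
  obtain \<delta>1 where \<delta>1: "\<delta>1 > 0" "\<And>n a b. nonoverlapping_on c d n a b \<Longrightarrow> (\<Sum>k<n. b k - a k) < \<delta>1
      \<Longrightarrow> (\<Sum>k<n. \<bar>f (b k) - f (a k)\<bar>) < \<epsilon> / 2"
    using abs_cont_onE[OF f, of "\<epsilon> / 2"] \<open>\<epsilon> > 0\<close> by auto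
  obtain \<delta>2 where \<delta>2: "\<delta>2 > 0" "\<And>n a b. nonoverlapping_on c d n a b \<Longrightarrow> (\<Sum>k<n. b k - a k) < \<delta>2
      \<Longrightarrow> (\<Sum>k<n. \<bar>g (b k) - g (a k)\<bar>) < \<epsilon> / 2"
    using abs_cont_onE[OF g, of "\<epsilon> / 2"] \<open>\<epsilon> > 0\<close> by auto
  show "\<exists>\<delta>>0. \<forall>n a b. nonoverlapping_on c d n a b \<and> (\<Sum>k<n. b k - a k) < \<delta>
          \<longrightarrow> (\<Sum>k<n. \<bar>f (b k) + g (b k) - (f (a k) + g (a k))\<bar>) < \<epsilon>"
  proof (intro exI[of _ "min \<delta>1 \<delta>2"] conjI allI impI)
    fix n a b assume H: "nonoverlapping_on c d n a b \<and> (\<Sum>k<n. b k - a k) < min \<delta>1 \<delta>2"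
    have "(\<Sum>k<n. \<bar>f (b k) + g (b k) - (f (a k) + g (a k))\<bar>)
        \<le> (\<Sum>k<n. \<bar>f (b k) - f (a k)\<bar>) + (\<Sum>k<n. \<bar>g (b k) - g (a k)\<bar>)"
      unfolding sum.distrib[symmetric] by (rule sum_mono) linarith
    also have "\<dots> < \<epsilon>" using H \<delta>1(2)[of n a b] \<delta>2(2)[of n a b] by simp
    finally show "(\<Sum>k<n. \<bar>f (b k) + g (b k) - (f (a k) + g (a k))\<bar>) < \<epsilon>" .
  qed (use \<delta>1 \<delta>2 in simp)
qed

lemma abs_cont_on_const: "abs_cont_on c d (\<lambda>x. a)"
  by (rule lipschitz_on_imp_abs_cont_on) (rule lipschitz_on_constant)

lemma abs_cont_on_sum:
  assumes "finite I" "\<And>i. i \<in> I \<Longrightarrow> abs_cont_on c d (f i)"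
  shows "abs_cont_on c d (\<lambda>x. \<Sum>i\<in>I. f i x)"
  using assms by (induction I rule: finite_induct) (simp_all add: abs_cont_on_const abs_cont_on_add)

lemma abs_cont_on_suminf:
  fixes f :: "nat \<Rightarrow> real \<Rightarrow> real" and V :: "nat \<Rightarrow> real"
  assumes ac: "\<And>i. abs_cont_on c d (f i)"
    and var: "\<And>i n a b. nonoverlapping_on c d n a b \<Longrightarrow> (\<Sum>k<n. \<bar>f i (b k) - f i (a k)\<bar>) \<le> V i"
    and "summable V"
    and summable_f: "\<And>x. x \<in> {c..d} \<Longrightarrow> summable (\<lambda>i. f i x)"
  shows "abs_cont_on c d (\<lambda>x. \<Sum>i. f i x)"
proof (rule abs_cont_onI)
  fix \<epsilon> :: real assume "\<epsilon> > 0"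
  have osc_le: "\<bar>f i y - f i x\<bar> \<le> V i" if "c \<le> x" "x \<le> y" "y \<le> d" for i x y
    using var[of 1 "\<lambda>_. x" "\<lambda>_. y" i] that by (simp add: nonoverlapping_on_def)
  obtain J where J: "\<bar>\<Sum>i. V (i + J)\<bar> < \<epsilon> / 2"
    using suminf_exist_split[OF _ \<open>summable V\<close>, of "\<epsilon> / 2"] \<open>\<epsilon> > 0\<close> by auto
  have summable_tail: "summable (\<lambda>i. V (i + J))"
    using \<open>summable V\<close> by (rule summable_ignore_initial_segment)
  have "abs_cont_on c d (\<lambda>x. \<Sum>i<J. f i x)"
    using ac by (intro abs_cont_on_sum) auto
  then obtain \<delta> where "\<delta> > 0" and \<delta>: "\<And>n a b. nonoverlapping_on c d n a b \<Longrightarrow> (\<Sum>k<n. b k - a k) < \<delta>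
      \<Longrightarrow> (\<Sum>k<n. \<bar>(\<Sum>i<J. f i (b k)) - (\<Sum>i<J. f i (a k))\<bar>) < \<epsilon> / 2"
    by (rule abs_cont_onE[where \<epsilon> = "\<epsilon> / 2"]) (use \<open>\<epsilon> > 0\<close> in auto)
  define T where "T x y = (\<Sum>i. \<bar>f (i + J) y - f (i + J) x\<bar>)" for x y
  have summable_T: "summable (\<lambda>i. \<bar>f (i + J) y - f (i + J) x\<bar>)"
    if "c \<le> x" "x \<le> y" "y \<le> d" for x y
    by (rule summable_comparison_test'[OF summable_tail, where N = 0]) (use osc_le that in auto)
  have split: "\<bar>(\<Sum>i. f i y) - (\<Sum>i. f i x)\<bar> \<le> \<bar>(\<Sum>i<J. f i y) - (\<Sum>i<J. f i x)\<bar> + T x y"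
    if "c \<le> x" "x \<le> y" "y \<le> d" for x y
  proof -
    have summable_diff: "summable (\<lambda>i. f i y - f i x)"
      using that by (intro summable_diff summable_f) auto
    have "(\<Sum>i. f i y) - (\<Sum>i. f i x) = (\<Sum>i. f i y - f i x)"
      using that by (simp add: suminf_diff summable_f)
    also have "\<dots> = (\<Sum>i. f (i + J) y - f (i + J) x) + (\<Sum>i<J. f i y - f i x)"
      using summable_diff by (rule suminf_split_initial_segment)
    finally have "(\<Sum>i. f i y) - (\<Sum>i. f i x)
        = (\<Sum>i. f (i + J) y - f (i + J) x) + ((\<Sum>i<J. f i y) - (\<Sum>i<J. f i x))"
      by (simp add: sum_subtractf)
    moreover have "\<bar>\<Sum>i. f (i + J) y - f (i + J) x\<bar> \<le> T x y"
      unfolding T_def using summable_T[OF that] by (rule summable_rabs)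
    ultimately show ?thesis by linarith
  qed
  show "\<exists>\<delta>>0. \<forall>n a b. nonoverlapping_on c d n a b \<and> (\<Sum>k<n. b k - a k) < \<delta>
          \<longrightarrow> (\<Sum>k<n. \<bar>(\<Sum>i. f i (b k)) - (\<Sum>i. f i (a k))\<bar>) < \<epsilon>"
  proof (intro exI[of _ \<delta>] conjI allI impI)
    fix n a b assume H: "nonoverlapping_on c d n a b \<and> (\<Sum>k<n. b k - a k) < \<delta>"
    then have ab: "c \<le> a k" "a k \<le> b k" "b k \<le> d" if "k < n" for k
      using that by (auto simp: nonoverlapping_on_def)
    have "(\<Sum>k<n. T (a k) (b k)) = (\<Sum>i. \<Sum>k<n. \<bar>f (i + J) (b k) - f (i + J) (a k)\<bar>)"
      unfolding T_def using summable_T ab by (subst suminf_sum) auto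
    also have "\<dots> \<le> (\<Sum>i. V (i + J))"
      using summable_T ab var H summable_tail by (intro suminf_le summable_sum) auto
    finally have "(\<Sum>k<n. T (a k) (b k)) < \<epsilon> / 2" using J by linarith
    moreover have "(\<Sum>k<n. \<bar>(\<Sum>i. f i (b k)) - (\<Sum>i. f i (a k))\<bar>)
        \<le> (\<Sum>k<n. \<bar>(\<Sum>i<J. f i (b k)) - (\<Sum>i<J. f i (a k))\<bar>) + (\<Sum>k<n. T (a k) (b k))"
      unfolding sum.distrib[symmetric] using split ab by (intro sum_mono) auto
    ultimately show "(\<Sum>k<n. \<bar>(\<Sum>i. f i (b k)) - (\<Sum>i. f i (a k))\<bar>) < \<epsilon>"
      using \<delta> H by fastforce
  qed (rule \<open>\<delta> > 0\<close>)
qed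

section \<open>Ramps\<close>

definition ramp :: "real \<Rightarrow> real \<Rightarrow> real \<Rightarrow> real" where
  "ramp t e x = 1 - (min (max x t) (t + e) - t) / e"

definition ramps :: "(real \<Rightarrow> real) set" where
  "ramps = {ramp t e | t e. 0 < e}"

lemma ramp_in_ramps: "0 < e \<Longrightarrow> ramp t e \<in> ramps"
  by (auto simp: ramps_def)

lemma ramp_bounds:
  assumes "0 < e"
  shows "0 \<le> ramp t e x" and "ramp t e x \<le> 1"
  using assms by (auto simp: ramp_def min_def max_def field_simps)

lemma ramp_left: "0 < e \<Longrightarrow> x \<le> t \<Longrightarrow> ramp t e x = 1"
  by (simp add: ramp_def)

lemma ramp_right: "0 < e \<Longrightarrow> t + e \<le> x \<Longrightarrow> ramp t e x = 0"
  by (simp add: ramp_def)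

lemma lipschitz_on_ramp:
  assumes "0 < e"
  shows "(1 / e)-lipschitz_on S (ramp t e)"
proof (rule lipschitz_onI)
  fix x y
  have "\<bar>min (max y t) (t + e) - min (max x t) (t + e)\<bar> \<le> \<bar>x - y\<bar>"
    by (auto simp: min_def max_def abs_le_iff)
  then show "dist (ramp t e x) (ramp t e y) \<le> 1 / e * dist x y"
    using assms by (simp add: ramp_def dist_real_def diff_divide_distrib[symmetric] divide_right_mono)
qed (use assms in simp)

lemma ramp_diff_eq_measure:
  assumes "0 < e" "x \<le> y"
  shows "ramp t e x - ramp t e y = measure lborel ({x<..y} \<inter> {t<..t + e}) / e"
proof -
  have "{x<..y} \<inter> {t<..t + e} = {max x t<..min y (t + e)}"
    by auto
  moreover have "min (max y t) (t + e) - min (max x t) (t + e) = max 0 (min y (t + e) - max x t)"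
    using assms by (auto simp: min_def max_def)
  ultimately show ?thesis
    using assms by (simp add: ramp_def diff_divide_distrib[symmetric] max_def)
qed

lemma ramp_variation_le:
  assumes "0 < e" and family: "nonoverlapping_on c d n a b"
  shows "(\<Sum>k<n. \<bar>ramp t e (b k) - ramp t e (a k)\<bar>) \<le> 1"
proof -
  define I where "I k = {a k<..b k} \<inter> {t<..t + e}" for k
  have ab: "a k \<le> b k" if "k < n" for k
    using family that by (auto simp: nonoverlapping_on_def)
  have "(\<Sum>k<n. measure lborel (I k)) = measure lborel (\<Union>k<n. I k)"
  proof (rule measure_finite_Union[symmetric])
    show "disjoint_family_on I {..<n}"
      using family unfolding disjoint_family_on_def nonoverlapping_on_def I_def
      by (auto 0 4 dest: bspec)
    show "emeasure lborel (I k) \<noteq> \<infinity>" for k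
    proof -
      have "emeasure lborel (I k) \<le> emeasure lborel {t<..t + e}"
        unfolding I_def by (rule emeasure_mono) auto
      also have "\<dots> < \<infinity>"
        using \<open>0 < e\<close> by simp
      finally show ?thesis
        by simp
    qed
  qed (auto simp: I_def)
  also have "\<dots> \<le> measure lborel {t<..t + e}"
    by (rule measure_mono_fmeasurable) (use \<open>0 < e\<close> in \<open>auto simp: I_def fmeasurable_def\<close>)
  finally have "(\<Sum>k<n. measure lborel (I k)) \<le> e"
    using \<open>0 < e\<close> by simp
  moreover have "(\<Sum>k<n. \<bar>ramp t e (b k) - ramp t e (a k)\<bar>) = (\<Sum>k<n. measure lborel (I k)) / e"
    using ramp_diff_eq_measure[OF \<open>0 < e\<close> ab] unfolding I_def
    by (simp add: sum_divide_distrib abs_minus_commute abs_of_pos[OF \<open>0 < e\<close>])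
  ultimately show ?thesis
    using \<open>0 < e\<close> by (simp add: divide_le_eq_1)
qed

lemma borel_measurable_ramp: "ramp t e \<in> borel_measurable borel"
  unfolding ramp_def by measurable

lemma ramps_abs_le_1: "v \<in> ramps \<Longrightarrow> \<bar>v x\<bar> \<le> 1"
  using ramp_bounds by (fastforce simp: ramps_def)

lemma abs_cont_on_ramps_cmult:
  assumes "v \<in> ramps"
  shows "abs_cont_on a b (\<lambda>x. c * v x)"
proof -
  obtain t e where "0 < e" "v = ramp t e"
    using assms by (auto simp: ramps_def)
  then show ?thesis
    by (auto intro: lipschitz_on_imp_abs_cont_on lipschitz_on_cmult_real lipschitz_on_ramp)
qed

lemma abs_cont_on_ramps_sum:
  fixes j :: nat
  assumes "\<And>i. i < j \<Longrightarrow> w i \<in> ramps"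
  shows "abs_cont_on a b (\<lambda>x. \<Sum>i<j. c i * w i x)"
  using assms by (intro abs_cont_on_sum abs_cont_on_ramps_cmult) auto

lemma abs_cont_on_ramps_suminf:
  assumes w: "\<And>i. w i \<in> ramps" and "summable (\<lambda>i. \<bar>c i\<bar>)"
  shows "abs_cont_on a b (\<lambda>x. \<Sum>i. c i * w i x)"
proof (rule abs_cont_on_suminf[where V = "\<lambda>i. \<bar>c i\<bar>"])
  fix i
  show "abs_cont_on a b (\<lambda>x. c i * w i x)"
    using w by (rule abs_cont_on_ramps_cmult)
  fix n a' b' assume "nonoverlapping_on a b n a' b'"
  moreover obtain t e where "0 < e" "w i = ramp t e"
    using w[of i] by (auto simp: ramps_def)
  ultimately have "(\<Sum>k<n. \<bar>w i (b' k) - w i (a' k)\<bar>) \<le> 1"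
    by (simp add: ramp_variation_le)
  then show "(\<Sum>k<n. \<bar>c i * w i (b' k) - c i * w i (a' k)\<bar>) \<le> \<bar>c i\<bar>"
    using mult_left_mono[of _ 1 "\<bar>c i\<bar>"]
    by (simp add: right_diff_distrib[symmetric] abs_mult sum_distrib_left[symmetric])
next
  show "summable (\<lambda>i. c i * w i x)" for x
    by (rule summable_comparison_test'[OF assms(2), where N = 0])
      (use ramps_abs_le_1[OF w] in \<open>simp add: abs_mult mult_left_le\<close>)
qed fact

section \<open>The gliding hump\<close>

lemma integrable_mult_bounded:
  fixes f q :: "'a \<Rightarrow> real"
  assumes "integrable M q" "f \<in> borel_measurable M" "\<And>x. x \<in> space M \<Longrightarrow> \<bar>f x\<bar> \<le> K"
  shows "integrable M (\<lambda>x. f x * q x)"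
proof (rule Bochner_Integration.integrable_bound)
  show "integrable M (\<lambda>x. K * \<bar>q x\<bar>)"
    using assms(1) by simp
  show "AE x in M. norm (f x * q x) \<le> norm (K * \<bar>q x\<bar>)"
  proof (rule AE_I2)
    fix x assume "x \<in> space M"
    then have "\<bar>f x\<bar> * \<bar>q x\<bar> \<le> \<bar>K\<bar> * \<bar>q x\<bar>"
      using assms(3) by (intro mult_right_mono) (auto intro: order_trans[OF _ abs_ge_self])
    then show "norm (f x * q x) \<le> norm (K * \<bar>q x\<bar>)"
      by (simp add: abs_mult)
  qed
qed (use assms in measurable)

lemma integral_mult_bounded_le:
  fixes f q :: "'a \<Rightarrow> real"
  assumes "integrable M q" "f \<in> borel_measurable M" "\<And>x. x \<in> space M \<Longrightarrow> \<bar>f x\<bar> \<le> K"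
  shows "\<bar>\<integral>x. f x * q x \<partial>M\<bar> \<le> K * (\<integral>x. \<bar>q x\<bar> \<partial>M)"
proof -
  have "integrable M (\<lambda>x. f x * q x)"
    using assms by (rule integrable_mult_bounded)
  have "\<bar>\<integral>x. f x * q x \<partial>M\<bar> \<le> (\<integral>x. \<bar>f x * q x\<bar> \<partial>M)"
    by (rule integral_abs_bound)
  also have "\<dots> \<le> (\<integral>x. K * \<bar>q x\<bar> \<partial>M)"
    using assms \<open>integrable M (\<lambda>x. f x * q x)\<close>
    by (intro integral_mono integrable_abs) (auto simp: abs_mult intro: mult_right_mono)
  also have "\<dots> = K * (\<integral>x. \<bar>q x\<bar> \<partial>M)"
    by simp
  finally show ?thesis .
qed

lemma geometric_tail_le:
  fixes a :: "nat \<Rightarrow> real"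
  assumes "\<And>i. k \<le> i \<Longrightarrow> \<bar>a i\<bar> \<le> B * (1/2)^Suc i"
  shows "summable a" and "\<bar>\<Sum>i. a (i + k)\<bar> \<le> B * (1/2)^k"
proof -
  have geometric: "(\<lambda>i. B * (1/2)^Suc (i + k)) sums (B * (1/2)^k)"
    using sums_mult[OF geometric_sums[of "1/2::real"], of "B * (1/2)^Suc k"]
    by (simp add: power_add mult_ac)
  have summable_abs: "summable (\<lambda>i. \<bar>a (i + k)\<bar>)"
    using assms by (intro summable_comparison_test'[OF sums_summable[OF geometric], where N = 0]) auto
  then have "summable (\<lambda>i. a (i + k))"
    by (rule summable_rabs_cancel)
  then show "summable a"
    by (rule summable_iff_shift[THEN iffD1])
  have "\<bar>\<Sum>i. a (i + k)\<bar> \<le> (\<Sum>i. \<bar>a (i + k)\<bar>)"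
    using summable_abs by (rule summable_rabs)
  also have "\<dots> \<le> (\<Sum>i. B * (1/2)^Suc (i + k))"
    using assms summable_abs sums_summable[OF geometric] by (intro suminf_le) auto
  finally have "\<bar>\<Sum>i. a (i + k)\<bar> \<le> (\<Sum>i. B * (1/2)^Suc (i + k))" .
  then show "\<bar>\<Sum>i. a (i + k)\<bar> \<le> B * (1/2)^k"
    using sums_unique[OF geometric] by simp
qed

(* With L k the L_1-norm of the k-th kernel and n the selected indices, the damping makes
   all humps added after stage i together change the functional at n i by at most 1. *)
definition damped_weight :: "(nat \<Rightarrow> real) \<Rightarrow> (nat \<Rightarrow> nat) \<Rightarrow> nat \<Rightarrow> real" where
  "damped_weight L n j = (1/2)^Suc j / (1 + (\<Sum>i<j. L (n i)))"

lemma damped_weight_pos: "(\<And>k. 0 \<le> L k) \<Longrightarrow> 0 < damped_weight L n j"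
  by (simp add: damped_weight_def sum_nonneg add_pos_nonneg)

lemma damped_weight_le:
  assumes "\<And>k. 0 \<le> L k"
  shows "damped_weight L n j \<le> (1/2)^Suc j"
proof -
  have "1 \<le> 1 + (\<Sum>i<j. L (n i))"
    using assms by (simp add: sum_nonneg)
  then show ?thesis
    using divide_left_mono[of 1 "1 + (\<Sum>i<j. L (n i))" "(1/2)^Suc j"] by (simp add: damped_weight_def)
qed

lemma damped_weight_le_tail:
  assumes "\<And>k. 0 \<le> L k" "i < m"
  shows "damped_weight L n m \<le> (1/2)^Suc m / (1 + L (n i))"
proof -
  have "1 + L (n i) \<le> 1 + (\<Sum>k<m. L (n k))"
    using assms by (intro add_left_mono member_le_sum) auto
  then show ?thesis
    unfolding damped_weight_def using assms(1)[of "n i"] by (intro divide_left_mono) auto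
qed

lemma gliding_hump_sequence:
  fixes U :: "nat \<Rightarrow> ('a \<Rightarrow> real) \<Rightarrow> real" and L :: "nat \<Rightarrow> real" and W :: "('a \<Rightarrow> real) set"
  assumes L_nonneg: "\<And>k. 0 \<le> L k"
    and choose: "\<And>(j::nat) c w A r. (\<And>i. i < j \<Longrightarrow> w i \<in> W) \<Longrightarrow> 0 < A \<Longrightarrow>
      \<exists>n. \<exists>v\<in>W. r + \<bar>U n (\<lambda>x. \<Sum>i<j. c i * w i x)\<bar> < A * \<bar>U n v\<bar>"
  obtains w n where "\<And>i. w i \<in> W"
    "\<And>j. real j + 1 + \<bar>U (n j) (\<lambda>x. \<Sum>i<j. damped_weight L n i * w i x)\<bar>
      < damped_weight L n j * \<bar>U (n j) (w j)\<bar>"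
proof -
  define pick where "pick S A r = (SOME p. snd p \<in> W \<and> r + \<bar>U (fst p) S\<bar> < A * \<bar>U (fst p) (snd p)\<bar>)"
    for S :: "'a \<Rightarrow> real" and A r :: real
  have pick: "snd (pick S A r) \<in> W \<and> r + \<bar>U (fst (pick S A r)) S\<bar> < A * \<bar>U (fst (pick S A r)) (snd (pick S A r))\<bar>"
    if "\<exists>p. snd p \<in> W \<and> r + \<bar>U (fst p) S\<bar> < A * \<bar>U (fst p) (snd p)\<bar>" for S A r
    using someI_ex[OF that] unfolding pick_def .
  define st where "st = rec_nat ((\<lambda>x. 0), 1) (\<lambda>j s.
     let p = pick (fst s) ((1/2)^Suc j / snd s) (real j + 1)
     in ((\<lambda>x. fst s x + (1/2)^Suc j / snd s * snd p x), snd s + L (fst p)))"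
  define c where "c j = (1/2)^Suc j / snd (st j)" for j
  define n where "n j = fst (pick (fst (st j)) (c j) (real j + 1))" for j
  define w where "w j = snd (pick (fst (st j)) (c j) (real j + 1))" for j
  have st_0: "st 0 = ((\<lambda>x. 0), 1)"
    by (simp add: st_def)
  have st_Suc: "st (Suc j) = ((\<lambda>x. fst (st j) x + c j * w j x), snd (st j) + L (n j))" for j
    by (simp add: st_def c_def n_def w_def Let_def)
  have partial_sum: "fst (st j) = (\<lambda>x. \<Sum>i<j. c i * w i x)" for j
    by (induction j) (simp_all add: st_0 st_Suc)
  have "snd (st j) = 1 + (\<Sum>i<j. L (n i))" for j
    by (induction j) (simp_all add: st_0 st_Suc)
  then have c_eq: "c = damped_weight L n"
    by (simp add: fun_eq_iff c_def damped_weight_def)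
  have "w j \<in> W \<and> real j + 1 + \<bar>U (n j) (\<lambda>x. \<Sum>i<j. c i * w i x)\<bar> < c j * \<bar>U (n j) (w j)\<bar>" for j
  proof (induction j rule: less_induct)
    case (less j)
    then have "\<exists>p. snd p \<in> W \<and> real j + 1 + \<bar>U (fst p) (fst (st j))\<bar> < c j * \<bar>U (fst p) (snd p)\<bar>"
      using choose[where j = j and c = c and w = w and A = "c j" and r = "real j + 1"]
        damped_weight_pos[OF L_nonneg]
      unfolding partial_sum c_eq by auto
    from pick[OF this] show ?case
      unfolding n_def[symmetric] w_def[symmetric] by (simp only: partial_sum)
  qed
  then show thesis
    using that unfolding c_eq by blast
qed

lemma damped_tail_le:
  fixes c :: "nat \<Rightarrow> real" and w :: "nat \<Rightarrow> 'a \<Rightarrow> real"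
  assumes "0 \<le> L" and w_bounded: "\<And>i. \<bar>w i x\<bar> \<le> 1" and c_nonneg: "\<And>i. 0 \<le> c i"
    and c_tail: "\<And>i. j < i \<Longrightarrow> c i \<le> (1/2)^Suc i / (1 + L)"
  shows "summable (\<lambda>i. c i * w i x)" and "\<bar>\<Sum>i. c (i + Suc j) * w (i + Suc j) x\<bar> \<le> 1 / (1 + L)"
proof -
  have term_le: "\<bar>c i * w i x\<bar> \<le> 1 / (1 + L) * (1/2)^Suc i" if "Suc j \<le> i" for i
  proof -
    have "\<bar>c i * w i x\<bar> \<le> c i"
      using mult_left_mono[OF w_bounded[of i] c_nonneg[of i]] c_nonneg[of i] by (simp add: abs_mult)
    also have "\<dots> \<le> (1/2)^Suc i / (1 + L)"
      using c_tail[of i] that by simp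
    finally show ?thesis
      by (simp add: mult.commute)
  qed
  then show "summable (\<lambda>i. c i * w i x)"
    by (rule geometric_tail_le(1))
  have "\<bar>\<Sum>i. c (i + Suc j) * w (i + Suc j) x\<bar> \<le> 1 / (1 + L) * (1/2)^Suc j"
    using term_le by (rule geometric_tail_le(2))
  also have "\<dots> \<le> 1 / (1 + L)"
    using \<open>0 \<le> L\<close> by (intro mult_left_le power_le_one) auto
  finally show "\<bar>\<Sum>i. c (i + Suc j) * w (i + Suc j) x\<bar> \<le> 1 / (1 + L)" .
qed

lemma gliding_hump_estimate:
  fixes M :: "'a measure" and q :: "'a \<Rightarrow> real" and w :: "nat \<Rightarrow> 'a \<Rightarrow> real" and c :: "nat \<Rightarrow> real"
  assumes q: "integrable M q"
    and w_measurable: "\<And>i. w i \<in> borel_measurable M" and w_bounded: "\<And>i x. \<bar>w i x\<bar> \<le> 1"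
    and c_nonneg: "\<And>i. 0 \<le> c i"
    and c_tail: "\<And>i. j < i \<Longrightarrow> c i \<le> (1/2)^Suc i / (1 + (\<integral>x. \<bar>q x\<bar> \<partial>M))"
    and hump: "r + 1 + \<bar>\<integral>x. (\<Sum>i<j. c i * w i x) * q x \<partial>M\<bar> < c j * \<bar>\<integral>x. w j x * q x \<partial>M\<bar>"
  shows "r < \<bar>\<integral>x. (\<Sum>i. c i * w i x) * q x \<partial>M\<bar>"
proof -
  define L where "L = (\<integral>x. \<bar>q x\<bar> \<partial>M)"
  define S where "S x = (\<Sum>i<j. c i * w i x)" for x
  define R where "R x = (\<Sum>i. c (i + Suc j) * w (i + Suc j) x)" for x
  note w_measurable[measurable]
  have S_measurable: "S \<in> borel_measurable M" and R_measurable: "R \<in> borel_measurable M"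
    unfolding S_def R_def by measurable
  have "0 \<le> L"
    unfolding L_def by simp
  have c_tail': "c i \<le> (1/2)^Suc i / (1 + L)" if "j < i" for i
    using c_tail[OF that] by (simp only: L_def)
  have summable: "summable (\<lambda>i. c i * w i x)" for x
    using \<open>0 \<le> L\<close> w_bounded c_nonneg c_tail' by (rule damped_tail_le(1))
  have R_le: "\<bar>R x\<bar> \<le> 1 / (1 + L)" for x
    unfolding R_def using \<open>0 \<le> L\<close> w_bounded c_nonneg c_tail' by (rule damped_tail_le(2))
  have "\<bar>\<integral>x. R x * q x \<partial>M\<bar> \<le> 1 / (1 + L) * L"
    unfolding L_def by (intro integral_mult_bounded_le) (use q R_measurable R_le in \<open>auto simp: L_def\<close>)
  also have "\<dots> \<le> 1"
    using \<open>0 \<le> L\<close> by (simp add: divide_le_eq_1)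
  finally have R_small: "\<bar>\<integral>x. R x * q x \<partial>M\<bar> \<le> 1" .
  have "(\<Sum>i. c i * w i x) = R x + (\<Sum>i<Suc j. c i * w i x)" for x
    unfolding R_def using summable by (rule suminf_split_initial_segment)
  then have split: "(\<lambda>x. (\<Sum>i. c i * w i x) * q x) = (\<lambda>x. S x * q x + (c j * (w j x * q x) + R x * q x))"
    by (auto simp: S_def algebra_simps)
  have "integrable M (\<lambda>x. S x * q x)"
    by (rule integrable_mult_bounded[OF q S_measurable, where K = "\<Sum>i<j. c i"])
      (use c_nonneg w_bounded in \<open>auto simp: S_def abs_mult intro!: sum_abs[THEN order_trans] sum_mono mult_left_le\<close>)
  moreover have "integrable M (\<lambda>x. w j x * q x)"
    by (rule integrable_mult_bounded[OF q w_measurable]) (rule w_bounded)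
  moreover have "integrable M (\<lambda>x. R x * q x)"
    by (rule integrable_mult_bounded[OF q R_measurable]) (rule R_le)
  ultimately have "(\<integral>x. (\<Sum>i. c i * w i x) * q x \<partial>M)
      = (\<integral>x. S x * q x \<partial>M) + c j * (\<integral>x. w j x * q x \<partial>M) + (\<integral>x. R x * q x \<partial>M)"
    unfolding split by simp
  moreover have "\<bar>c j * (\<integral>x. w j x * q x \<partial>M)\<bar> = c j * \<bar>\<integral>x. w j x * q x \<partial>M\<bar>"
    using c_nonneg[of j] by (simp add: abs_mult)
  ultimately show ?thesis
    using hump R_small unfolding S_def by linarith
qed

lemma gliding_hump:
  fixes M :: "'a measure" and q :: "nat \<Rightarrow> 'a \<Rightarrow> real" and W :: "('a \<Rightarrow> real) set"
  assumes q: "\<And>n. integrable M (q n)"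
    and W_measurable: "\<And>v. v \<in> W \<Longrightarrow> v \<in> borel_measurable M"
    and W_bounded: "\<And>v x. v \<in> W \<Longrightarrow> \<bar>v x\<bar> \<le> 1"
    and unbounded_on_W: "\<And>C. \<exists>n. \<exists>v\<in>W. C < \<bar>\<integral>x. v x * q n x \<partial>M\<bar>"
    and bounded_on_combinations: "\<And>(j::nat) c w. (\<And>i. i < j \<Longrightarrow> w i \<in> W) \<Longrightarrow>
      \<exists>K. \<forall>n. \<bar>\<integral>x. (\<Sum>i<j. c i * w i x) * q n x \<partial>M\<bar> \<le> K"
  obtains c w where "\<And>i. w i \<in> W" "\<And>i. 0 < c i" "\<And>i. c i \<le> (1/2)^Suc i"
    "\<And>C. \<exists>n. C < \<bar>\<integral>x. (\<Sum>i. c i * w i x) * q n x \<partial>M\<bar>"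
proof -
  define U where "U n f = (\<integral>x. f x * q n x \<partial>M)" for n f
  define L where "L n = (\<integral>x. \<bar>q n x\<bar> \<partial>M)" for n
  have L_nonneg: "0 \<le> L n" for n
    unfolding L_def by simp
  have choose: "\<exists>n. \<exists>v\<in>W. r + \<bar>U n (\<lambda>x. \<Sum>i<j. c i * w i x)\<bar> < A * \<bar>U n v\<bar>"
    if w_in_W: "\<And>i. i < j \<Longrightarrow> w i \<in> W" and "0 < A" for j :: nat and c w A r
  proof -
    obtain K where K: "\<And>n. \<bar>U n (\<lambda>x. \<Sum>i<j. c i * w i x)\<bar> \<le> K"
      using bounded_on_combinations[where j = j and c = c and w = w] w_in_W unfolding U_def by blast
    obtain n v where "v \<in> W" "(K + r) / A < \<bar>U n v\<bar>"
      using unbounded_on_W unfolding U_def by blast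
    then show ?thesis
      using K[of n] \<open>0 < A\<close> by (intro exI[of _ n] bexI[of _ v]) (auto simp: pos_divide_less_eq mult.commute)
  qed
  obtain w n where w: "\<And>i. w i \<in> W" and hump: "\<And>j. real j + 1
      + \<bar>U (n j) (\<lambda>x. \<Sum>i<j. damped_weight L n i * w i x)\<bar> < damped_weight L n j * \<bar>U (n j) (w j)\<bar>"
    using gliding_hump_sequence[of L W U, OF L_nonneg choose] by blast
  have "real j < \<bar>\<integral>x. (\<Sum>i. damped_weight L n i * w i x) * q (n j) x \<partial>M\<bar>" for j
  proof (rule gliding_hump_estimate[where j = j])
    show "damped_weight L n i \<le> (1/2)^Suc i / (1 + (\<integral>x. \<bar>q (n j) x\<bar> \<partial>M))" if "j < i" for i
      using damped_weight_le_tail[where L = L and n = n, OF L_nonneg that] L_def[of "n j"] by (simp only:)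
  qed (use q W_measurable[OF w] W_bounded[OF w] hump[of j] damped_weight_pos[where L = L, OF L_nonneg]
       in \<open>auto simp: U_def less_imp_le\<close>)
  then have "\<exists>n'. C < \<bar>\<integral>x. (\<Sum>i. damped_weight L n i * w i x) * q n' x \<partial>M\<bar>" for C
    by (meson le_less_trans real_nat_ceiling_ge)
  then show thesis
    using that w damped_weight_pos[where L = L, OF L_nonneg] damped_weight_le[where L = L, OF L_nonneg]
    by blast
qed

section \<open>The functionals U_n\<close>

lemma limsup_ereal_eq_PInfty_iff: "limsup (\<lambda>n. ereal (X n)) = \<infinity> \<longleftrightarrow> (\<forall>C. \<exists>n. C < X n)"
proof
  assume "limsup (\<lambda>n. ereal (X n)) = \<infinity>"
  show "\<forall>C. \<exists>n. C < X n"
  proof (rule ccontr)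
    assume "\<not> (\<forall>C. \<exists>n. C < X n)"
    then obtain C where "\<And>n. X n \<le> C"
      by (auto simp: not_less)
    then have "limsup (\<lambda>n. ereal (X n)) \<le> ereal C"
      by (intro Limsup_bounded) auto
    with \<open>limsup (\<lambda>n. ereal (X n)) = \<infinity>\<close> show False
      by simp
  qed
next
  assume unbounded: "\<forall>C. \<exists>n. C < X n"
  show "limsup (\<lambda>n. ereal (X n)) = \<infinity>"
  proof (rule ccontr)
    assume "limsup (\<lambda>n. ereal (X n)) \<noteq> \<infinity>"
    then obtain C where "\<And>n. X n \<le> C"
      using limsup_finite_then_bounded[of X] by (auto simp: less_top)
    with unbounded show False
      by (meson not_less)
  qed
qed

lemma borel_measurable_imp_lebesgue_on:
  "f \<in> borel_measurable borel \<Longrightarrow> f \<in> borel_measurable (lebesgue_on S)"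
  by (simp add: measurable_completion measurable_restrict_space1)

lemma ramps_borel_measurable: "v \<in> ramps \<Longrightarrow> v \<in> borel_measurable (lebesgue_on S)"
  by (auto simp: ramps_def intro: borel_measurable_imp_lebesgue_on borel_measurable_ramp)

lemma tendsto_integral_ramp:
  fixes q :: "real \<Rightarrow> real"
  assumes q: "integrable (lebesgue_on S) q"
  shows "(\<lambda>m. \<integral>x. ramp t (1 / Suc m) x * q x \<partial>lebesgue_on S)
    \<longlonglongrightarrow> (\<integral>x. indicator {..t} x * q x \<partial>lebesgue_on S)"
proof (rule integral_dominated_convergence[where w = "\<lambda>x. \<bar>q x\<bar>"])
  have indicator: "(\<lambda>x. indicator {..t} x :: real) \<in> borel_measurable borel"
    by measurable
  show "(\<lambda>x. indicator {..t} x * q x) \<in> borel_measurable (lebesgue_on S)"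
    using borel_measurable_imp_lebesgue_on[OF indicator] borel_measurable_integrable[OF q]
    by (rule borel_measurable_times)
  show "(\<lambda>x. ramp t (1 / Suc m) x * q x) \<in> borel_measurable (lebesgue_on S)" for m
    using q borel_measurable_imp_lebesgue_on[OF borel_measurable_ramp] by (intro borel_measurable_times) auto
  show "AE x in lebesgue_on S. norm (ramp t (1 / Suc m) x * q x) \<le> \<bar>q x\<bar>" for m
    using ramp_bounds[of "1 / Suc m" t] by (intro AE_I2) (auto simp: abs_mult intro: mult_left_le_one_le)
  show "AE x in lebesgue_on S. (\<lambda>m. ramp t (1 / Suc m) x * q x) \<longlonglongrightarrow> indicator {..t} x * q x"
  proof (rule AE_I2)
    fix x
    show "(\<lambda>m. ramp t (1 / Suc m) x * q x) \<longlonglongrightarrow> indicator {..t} x * q x"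
    proof (cases "x \<le> t")
      case True
      then show ?thesis
        by (simp add: ramp_left)
    next
      case False
      then obtain M where "1 / Suc M < x - t"
        using reals_Archimedean[of "x - t"] by (auto simp: inverse_eq_divide)
      then have "ramp t (1 / Suc m) x = 0" if "M \<le> m" for m
        using that frac_le[of 1 1 "Suc M" "Suc m"] by (intro ramp_right) auto
      then have "eventually (\<lambda>m. ramp t (1 / Suc m) x * q x = 0) sequentially"
        unfolding eventually_sequentially by auto
      then show ?thesis
        using False by (simp add: tendsto_eventually)
    qed
  qed
qed (use q in simp)

lemma integral_lebesgue_on_initial_segment:
  fixes f :: "real \<Rightarrow> real"
  assumes "t \<le> 1"
  shows "integral\<^sup>L (lebesgue_on {0..t}) f = (\<integral>x. indicator {..t} x * f x \<partial>lebesgue_on {0..1})"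
proof -
  have "integral\<^sup>L (lebesgue_on {0..t}) f = (\<integral>x. indicator {0..t} x * f x \<partial>lebesgue)"
    by (simp add: integral_restrict_space)
  also have "\<dots> = (\<integral>x. indicator {0..1} x * (indicator {..t} x * f x) \<partial>lebesgue)"
    using assms by (intro Bochner_Integration.integral_cong) (auto simp: indicator_def)
  also have "\<dots> = (\<integral>x. indicator {..t} x * f x \<partial>lebesgue_on {0..1})"
    by (simp add: integral_restrict_space)
  finally show ?thesis .
qed

lemma orthonormal_system_integrable:
  assumes "orthonormal_system \<phi>" "1 \<le> k"
  shows "integrable (lebesgue_on {0..1}) (\<phi> k)"
proof (rule finite_measure.square_integrable_imp_integrable)
  show "finite_measure (lebesgue_on {0..1::real})"
    by (simp add: finite_measure_lebesgue_on)
  show "\<phi> k \<in> borel_measurable (lebesgue_on {0..1})"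
    and "integrable (lebesgue_on {0..1}) (\<lambda>x. (\<phi> k x)\<^sup>2)"
    using assms by (auto simp: orthonormal_system_def power2_eq_square)
qed

lemma integrable_Qn:
  assumes "orthonormal_system \<phi>"
  shows "integrable (lebesgue_on {0..1}) (Qn d b \<phi> n)"
  unfolding Qn_def[abs_def] using orthonormal_system_integrable[OF assms]
  by (intro Bochner_Integration.integrable_sum integrable_mult_right) auto

lemma Bn_attained:
  "\<exists>t\<le>1. Bn d b \<phi> n \<le> \<bar>\<integral>x. indicator {..t} x * Qn d b \<phi> n x \<partial>lebesgue_on {0..1}\<bar>"
proof (cases "n < 2")
  case True
  then show ?thesis
    by (intro exI[of _ 0]) (simp add: Bn_def)
next
  case False
  let ?F = "\<lambda>i. \<bar>integral\<^sup>L (lebesgue_on {0..real i / real n}) (Qn d b \<phi> n)\<bar>"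
  have "Max (?F ` {1..<n}) \<in> ?F ` {1..<n}"
    using False by (intro Max_in) auto
  then obtain i where "i < n" "Max (?F ` {1..<n}) = ?F i"
    by auto
  then have Bn_eq: "Bn d b \<phi> n = ?F i"
    using False by (simp add: Bn_def)
  from \<open>i < n\<close> have "real i / real n \<le> 1"
    by simp
  then show ?thesis
    using Bn_eq integral_lebesgue_on_initial_segment[of "real i / real n"] by (intro exI[of _ "real i / real n"]) auto
qed

lemma exists_ramp_Un_op_gt_Bn:
  assumes "orthonormal_system \<phi>"
  shows "\<exists>v\<in>ramps. Bn d b \<phi> n - 1 < \<bar>Un_op d b \<phi> n v\<bar>"
proof -
  obtain t where "Bn d b \<phi> n \<le> \<bar>\<integral>x. indicator {..t} x * Qn d b \<phi> n x \<partial>lebesgue_on {0..1}\<bar>"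
    using Bn_attained by blast
  moreover have "(\<lambda>m. Un_op d b \<phi> n (ramp t (1 / Suc m)))
      \<longlonglongrightarrow> (\<integral>x. indicator {..t} x * Qn d b \<phi> n x \<partial>lebesgue_on {0..1})"
    unfolding Un_op_def by (rule tendsto_integral_ramp[OF integrable_Qn[OF assms]])
  then obtain m where "\<bar>Un_op d b \<phi> n (ramp t (1 / Suc m))
      - (\<integral>x. indicator {..t} x * Qn d b \<phi> n x \<partial>lebesgue_on {0..1})\<bar> < 1"
    using LIMSEQ_D[OF _ zero_less_one] by (metis order_refl real_norm_def)
  moreover have "ramp t (1 / Suc m) \<in> ramps"
    by (simp add: ramp_in_ramps)
  ultimately show ?thesis
    by (intro bexI[of _ "ramp t (1 / Suc m)"]) auto
qed

lemma Un_op_unbounded_on_ramps: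
  assumes "orthonormal_system \<phi>" and "limsup (\<lambda>n. ereal (Bn d b \<phi> n)) = \<infinity>"
  shows "\<exists>n. \<exists>v\<in>ramps. C < \<bar>Un_op d b \<phi> n v\<bar>"
proof -
  obtain n where "C + 1 < Bn d b \<phi> n"
    using assms(2) by (auto simp: limsup_ereal_eq_PInfty_iff)
  moreover obtain v where "v \<in> ramps" "Bn d b \<phi> n - 1 < \<bar>Un_op d b \<phi> n v\<bar>"
    using exists_ramp_Un_op_gt_Bn[OF assms(1)] by blast
  ultimately show ?thesis
    by (intro exI[of _ n] bexI[of _ v]) auto
qed

theorem theorem2:
  fixes \<phi> :: "nat \<Rightarrow> real \<Rightarrow> real" and d b :: "nat \<Rightarrow> real"
  assumes "orthonormal_system \<phi>"
    and "\<exists>C. \<forall>n\<ge>1. \<bar>d n\<bar> \<le> C * sqrt (real n) / (ln (real n + 1))\<^sup>2"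
    and "summable (\<lambda>n. (b n)\<^sup>2)"
    and "limsup (\<lambda>n. ereal (Bn d b \<phi> n)) = \<infinity>"
  shows "\<exists>g. abs_cont_on 0 1 g \<and> limsup (\<lambda>n. ereal \<bar>Un_op d b \<phi> n g\<bar>) = \<infinity>"
proof (rule ccontr)
  assume no_g: "\<nexists>g. abs_cont_on 0 1 g \<and> limsup (\<lambda>n. ereal \<bar>Un_op d b \<phi> n g\<bar>) = \<infinity>"
  have bounded: "\<exists>K. \<forall>n. \<bar>Un_op d b \<phi> n (\<lambda>x. \<Sum>i<j. c i * w i x)\<bar> \<le> K"
    if "\<And>i. i < j \<Longrightarrow> w i \<in> ramps" for j :: nat and c w
    using no_g abs_cont_on_ramps_sum[OF that] by (auto simp: limsup_ereal_eq_PInfty_iff not_less)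
  show False
  proof (rule gliding_hump[of "lebesgue_on {0..1}" "Qn d b \<phi>" ramps])
    fix c w
    assume w: "\<And>i. w i \<in> ramps" and c_pos: "\<And>i. 0 < c i" and c_le: "\<And>i. c i \<le> (1/2)^Suc i"
      and "\<And>C. \<exists>n. C < \<bar>\<integral>x. (\<Sum>i. c i * w i x) * Qn d b \<phi> n x \<partial>lebesgue_on {0..1}\<bar>"
    then have "limsup (\<lambda>n. ereal \<bar>Un_op d b \<phi> n (\<lambda>x. \<Sum>i. c i * w i x)\<bar>) = \<infinity>"
      by (simp add: limsup_ereal_eq_PInfty_iff Un_op_def)
    moreover have "summable (\<lambda>i. \<bar>c i\<bar>)"
      using c_pos c_le by (intro geometric_tail_le(1)[where k = 0 and B = 1]) (simp add: less_imp_le)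
    then have "abs_cont_on 0 1 (\<lambda>x. \<Sum>i. c i * w i x)"
      using w by (intro abs_cont_on_ramps_suminf)
    ultimately show False
      using no_g by blast
  qed (use assms(1,4) integrable_Qn ramps_borel_measurable ramps_abs_le_1 Un_op_unbounded_on_ramps bounded
       in \<open>auto simp: Un_op_def\<close>)
qed

end
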